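(* Let $M$ be a packed square matrix and $(M_1, M_2)$ be a column (resp. row) decomposition of $M$. Then, there is no integer $i$ such that the $i$th rows (resp. columns) of $M_1$ and $M_2$ contain both a nonzero entry.
   Context: Let $k \geq 1$, $A_k := \{0,1,\dots,k\}$. A ($k$-)packed matrix of size $n$ is an $n \times n$ matrix with entries in $A_k$ having at least one nonzero entry in each row and each column. The compression $\operatorname{cp}(M)$ of a matrix $M$ is the matrix obtained by deleting all null rows and columns of $M$. A tuple $(M_1,\dots,M_r)$ is a column decomposition of $M$ if $M$ is the horizontal juxtaposition $[M_1 | \cdots | M_r]$ and each $\operatorname{cp}(M_i)$ is a square matrix; it is a row decomposition of $M$ if $M$ is the vertical stacking of $M_1, \dots, M_r$ (from top to bottom) and each $\operatorname{cp}(M_i)$ is a square matrix. *)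

theory Defs
  imports "Jordan_Normal_Form.Matrix"
begin

definition packed :: "nat \<Rightarrow> nat \<Rightarrow> nat mat \<Rightarrow> bool" where
  "packed k n M \<longleftrightarrow> dim_row M = n \<and> dim_col M = n
     \<and> (\<forall>i<n. \<forall>j<n. M $$ (i,j) \<in> {0..k})
     \<and> (\<forall>i<n. \<exists>j<n. M $$ (i,j) \<noteq> 0)
     \<and> (\<forall>j<n. \<exists>i<n. M $$ (i,j) \<noteq> 0)"

definition nonnull_rows :: "nat mat \<Rightarrow> nat set" where
  "nonnull_rows M = {i. i < dim_row M \<and> (\<exists>j<dim_col M. M $$ (i,j) \<noteq> 0)}"

definition nonnull_cols :: "nat mat \<Rightarrow> nat set" where
  "nonnull_cols M = {j. j < dim_col M \<and> (\<exists>i<dim_row M. M $$ (i,j) \<noteq> 0)}"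

definition cp :: "nat mat \<Rightarrow> nat mat" where
  "cp M = mat (card (nonnull_rows M)) (card (nonnull_cols M))
      (\<lambda>(i,j). M $$ (sorted_list_of_set (nonnull_rows M) ! i,
                    sorted_list_of_set (nonnull_cols M) ! j))"

definition square :: "'a mat \<Rightarrow> bool" where
  "square A \<longleftrightarrow> dim_row A = dim_col A"

definition hjux :: "'a mat \<Rightarrow> 'a mat \<Rightarrow> 'a mat" where
  "hjux A B = mat (dim_row A) (dim_col A + dim_col B)
     (\<lambda>(i,j). if j < dim_col A then A $$ (i,j) else B $$ (i, j - dim_col A))"

definition vstack :: "'a mat \<Rightarrow> 'a mat \<Rightarrow> 'a mat" where
  "vstack A B = mat (dim_row A + dim_row B) (dim_col A)
     (\<lambda>(i,j). if i < dim_row A then A $$ (i,j) else B $$ (i - dim_row A, j))"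

definition col_decomp2 :: "nat mat \<Rightarrow> nat mat \<Rightarrow> nat mat \<Rightarrow> bool" where
  "col_decomp2 M M1 M2 \<longleftrightarrow> dim_row M1 = dim_row M \<and> dim_row M2 = dim_row M
     \<and> M = hjux M1 M2 \<and> square (cp M1) \<and> square (cp M2)"

definition row_decomp2 :: "nat mat \<Rightarrow> nat mat \<Rightarrow> nat mat \<Rightarrow> bool" where
  "row_decomp2 M M1 M2 \<longleftrightarrow> dim_col M1 = dim_col M \<and> dim_col M2 = dim_col M
     \<and> M = vstack M1 M2 \<and> square (cp M1) \<and> square (cp M2)"

end

theory Submission
  imports Defs
begin

text \<open>In a column decomposition [M1 | M2] of a packed n \<times> n matrix every column of M1 and M2
  is nonnull, so squareness of the compressions means that M1 has exactly dim_col M1 nonnull rows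
  and M2 exactly dim_col M2. These counts add up to n, while each of the n rows of M is nonnull
  in M1 or in M2; hence no row is nonnull in both. Row decompositions become column
  decompositions under transposition.\<close>

lemma ex_less_add_iff:
  "(\<exists>j < a + b. P j) \<longleftrightarrow> (\<exists>j < a. P j) \<or> (\<exists>j < b. P (a + j))" for a b :: nat
proof
  assume "\<exists>j < a + b. P j"
  then obtain j where j: "j < a + b" "P j" by blast
  show "(\<exists>j < a. P j) \<or> (\<exists>j < b. P (a + j))"
  proof (cases "j < a")
    case False
    with j show ?thesis by (intro disjI2 exI[of _ "j - a"]) auto
  qed (use j in blast)
qed (metis trans_less_add1 add_less_cancel_left)

lemma dim_row_hjux [simp]: "dim_row (hjux A B) = dim_row A"
  by (simp add: hjux_def)

lemma dim_col_hjux [simp]: "dim_col (hjux A B) = dim_col A + dim_col B"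
  by (simp add: hjux_def)

lemma nonnull_rows_hjux:
  "dim_row A = dim_row B \<Longrightarrow> nonnull_rows (hjux A B) = nonnull_rows A \<union> nonnull_rows B"
  unfolding nonnull_rows_def by (auto simp: hjux_def ex_less_add_iff)

lemma left_col_nonnull_hjux:
  "j < dim_col A \<Longrightarrow> j \<in> nonnull_cols (hjux A B) \<longleftrightarrow> j \<in> nonnull_cols A"
  unfolding nonnull_cols_def by (auto simp: hjux_def)

lemma right_col_nonnull_hjux:
  "dim_row A = dim_row B \<Longrightarrow> j < dim_col B \<Longrightarrow>
   dim_col A + j \<in> nonnull_cols (hjux A B) \<longleftrightarrow> j \<in> nonnull_cols B"
  unfolding nonnull_cols_def by (auto simp: hjux_def)

lemma square_cp_iff: "square (cp M) \<longleftrightarrow> card (nonnull_rows M) = card (nonnull_cols M)"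
  unfolding square_def cp_def by simp

lemma packed_nonnull_rows: "packed k n M \<Longrightarrow> nonnull_rows M = {..<n}"
  unfolding packed_def nonnull_rows_def by auto

lemma packed_nonnull_cols: "packed k n M \<Longrightarrow> nonnull_cols M = {..<n}"
  unfolding packed_def nonnull_cols_def by auto

lemma nonnull_rows_transpose: "nonnull_rows (transpose_mat M) = nonnull_cols M"
  unfolding nonnull_rows_def nonnull_cols_def by auto

lemma nonnull_cols_transpose: "nonnull_cols (transpose_mat M) = nonnull_rows M"
  unfolding nonnull_rows_def nonnull_cols_def by auto

lemma packed_transpose: "packed k n M \<Longrightarrow> packed k n (transpose_mat M)"
  unfolding packed_def by (auto simp: Bex_def) (metis index_transpose_mat(1))+

lemma transpose_vstack:
  "dim_col A = dim_col B \<Longrightarrow>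
   transpose_mat (vstack A B) = hjux (transpose_mat A) (transpose_mat B)"
  by (rule eq_matI) (auto simp: vstack_def hjux_def)

lemma col_decomp2_transpose_if_row_decomp2:
  assumes "row_decomp2 M M1 M2"
  shows "col_decomp2 (transpose_mat M) (transpose_mat M1) (transpose_mat M2)"
proof -
  have dims: "dim_col M1 = dim_col M" "dim_col M2 = dim_col M"
    and M: "M = vstack M1 M2" and sq: "square (cp M1)" "square (cp M2)"
    using assms unfolding row_decomp2_def by auto
  have "transpose_mat M = hjux (transpose_mat M1) (transpose_mat M2)"
    using M dims transpose_vstack[of M1 M2] by simp
  moreover have "square (cp (transpose_mat M1))" "square (cp (transpose_mat M2))"
    using sq by (simp_all add: square_cp_iff nonnull_rows_transpose nonnull_cols_transpose)
  ultimately show ?thesis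
    using dims unfolding col_decomp2_def by simp
qed

lemma disjoint_if_card_Un_eq_add:
  assumes "finite A" "finite B" "card (A \<union> B) = card A + card B"
  shows "A \<inter> B = {}"
  using card_Un_Int[OF assms(1,2)] assms by simp

lemma col_decomp2_nonnull_rows_disjoint:
  assumes "packed k n M" and "col_decomp2 M M1 M2"
  shows "nonnull_rows M1 \<inter> nonnull_rows M2 = {}"
proof -
  have dims: "dim_row M = n" "dim_col M = n"
    using assms(1) unfolding packed_def by simp_all
  have M: "M = hjux M1 M2" and rows: "dim_row M1 = n" "dim_row M2 = n"
    and sq: "square (cp M1)" "square (cp M2)"
    using assms(2) dims unfolding col_decomp2_def by simp_all
  have n: "dim_col M1 + dim_col M2 = n"
    using dims(2) M by simp
  have "j \<in> nonnull_cols M1" if "j < dim_col M1" for j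
    using left_col_nonnull_hjux[OF that, of M2] packed_nonnull_cols[OF assms(1)] M n that
    by auto
  then have "nonnull_cols M1 = {..<dim_col M1}"
    by (auto simp: nonnull_cols_def)
  then have card1: "card (nonnull_rows M1) = dim_col M1"
    using sq(1) by (simp add: square_cp_iff)
  have "j \<in> nonnull_cols M2" if "j < dim_col M2" for j
    using right_col_nonnull_hjux[of M1 M2 j] packed_nonnull_cols[OF assms(1)] M n rows that
    by auto
  then have "nonnull_cols M2 = {..<dim_col M2}"
    by (auto simp: nonnull_cols_def)
  then have card2: "card (nonnull_rows M2) = dim_col M2"
    using sq(2) by (simp add: square_cp_iff)
  have union: "nonnull_rows M1 \<union> nonnull_rows M2 = {..<n}"
    using nonnull_rows_hjux[of M1 M2] packed_nonnull_rows[OF assms(1)] M rows by simp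
  show ?thesis
  proof (rule disjoint_if_card_Un_eq_add)
    have "finite (nonnull_rows M1 \<union> nonnull_rows M2)"
      using union by simp
    then show "finite (nonnull_rows M1)" "finite (nonnull_rows M2)"
      by simp_all
    show "card (nonnull_rows M1 \<union> nonnull_rows M2) = card (nonnull_rows M1) + card (nonnull_rows M2)"
      using union card1 card2 n by simp
  qed
qed

theorem lemma1p1:
  fixes k n :: nat and M M1 M2 :: "nat mat"
  assumes "k \<ge> 1" and "packed k n M"
  shows "(col_decomp2 M M1 M2 \<longrightarrow>
           \<not> (\<exists>i. i < dim_row M \<and> (\<exists>j<dim_col M1. M1 $$ (i,j) \<noteq> 0)
                                 \<and> (\<exists>j<dim_col M2. M2 $$ (i,j) \<noteq> 0)))
       \<and> (row_decomp2 M M1 M2 \<longrightarrow>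
           \<not> (\<exists>j. j < dim_col M \<and> (\<exists>i<dim_row M1. M1 $$ (i,j) \<noteq> 0)
                                 \<and> (\<exists>i<dim_row M2. M2 $$ (i,j) \<noteq> 0)))"
proof (intro conjI impI)
  assume decomp: "col_decomp2 M M1 M2"
  then have "dim_row M1 = dim_row M" "dim_row M2 = dim_row M"
    unfolding col_decomp2_def by blast+
  with col_decomp2_nonnull_rows_disjoint[OF assms(2) decomp]
  show "\<not> (\<exists>i. i < dim_row M \<and> (\<exists>j<dim_col M1. M1 $$ (i,j) \<noteq> 0)
                                  \<and> (\<exists>j<dim_col M2. M2 $$ (i,j) \<noteq> 0))"
    unfolding nonnull_rows_def by auto
next
  assume decomp: "row_decomp2 M M1 M2"
  then have "dim_col M1 = dim_col M" "dim_col M2 = dim_col M"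
    unfolding row_decomp2_def by blast+
  moreover have "nonnull_cols M1 \<inter> nonnull_cols M2 = {}"
    using col_decomp2_nonnull_rows_disjoint[OF packed_transpose[OF assms(2)]
        col_decomp2_transpose_if_row_decomp2[OF decomp]]
    by (simp add: nonnull_rows_transpose)
  ultimately
  show "\<not> (\<exists>j. j < dim_col M \<and> (\<exists>i<dim_row M1. M1 $$ (i,j) \<noteq> 0)
                                  \<and> (\<exists>i<dim_row M2. M2 $$ (i,j) \<noteq> 0))"
    unfolding nonnull_cols_def by auto
qed

end
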